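(* Let $0\le \ell<n$ be integers, let $d$ be a divisor of $n$ and let $y\in\mathbb{Z}_{n,d}$. Then the number of $x\in\mathbb{Z}_n^*$ such that $xb\equiv y\pmod n$ for some integer $b$ with $0\le b\le \ell$ equals $$\frac{\varphi\!\left(\frac{n}{d},\left\lfloor \frac{\ell}{d}\right\rfloor\right)}{\varphi\!\left(\frac nd\right)}\,\varphi(n).$$
   Context: $\mathbb{Z}_m=\{0,1,\dots,m-1\}$ denotes the integers modulo $m$; $\mathbb{Z}_{m,d}=\{x\in\mathbb{Z}_m:\gcd(x,m)=d\}$ and $\mathbb{Z}_m^*=\mathbb{Z}_{m,1}$. $\varphi(m)=|\mathbb{Z}_m^*|$ is Euler's totient function, and the relative totient function is $\varphi(m,k)=|\{x\in\mathbb{Z}_m^*: x\le k\}|$. *)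

theory Defs
  imports Complex_Main "HOL-Number_Theory.Number_Theory"
begin

definition Zmd :: "nat \<Rightarrow> nat \<Rightarrow> nat set" where
  "Zmd m d = {x. x < m \<and> gcd x m = d}"

definition Zunits :: "nat \<Rightarrow> nat set" where
  "Zunits m = Zmd m 1"

definition rel_totient :: "nat \<Rightarrow> nat \<Rightarrow> nat" where
  "rel_totient m k = card {x \<in> Zunits m. x \<le> k}"

end

theory Submission imports Defs begin

text \<open>Write n = d m and y = d y', so that y' is a unit modulo m. For a unit x modulo n, a solution
  b \<le> l of x b = y (mod n) must be a multiple d c, and then (x mod m) c = y' (mod m) with
  c \<le> l div d. The residues a = x mod m admitting such a c correspond, via a \<mapsto> y' a\<inverse>, to the
  units c \<le> l div d modulo m, of which there are \<phi>(m, l div d). Finally reduction modulo m maps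
  the units modulo n onto the units modulo m with all fibres of size \<phi>(n)/\<phi>(m), because
  multiplication by a unit lifted from modulo m to modulo n carries one fibre injectively into
  another.\<close>

lemma Zunits_iff: "x \<in> Zunits n \<longleftrightarrow> x < n \<and> coprime x n"
  unfolding Zunits_def Zmd_def coprime_iff_gcd_eq_1 by (rule mem_Collect_eq)

lemma finite_Zunits [simp]: "finite (Zunits n)"
  by (simp add: Zunits_def Zmd_def)

lemma card_Zunits:
  assumes "n > 0"
  shows "card (Zunits n) = totient n"
proof (cases "n = 1")
  case True
  then have "Zunits n = {0}" by (auto simp: Zunits_iff)
  with True show ?thesis by simp
next
  case False
  have "x \<in> Zunits n \<longleftrightarrow> x \<in> totatives n" for x
  proof -
    have "coprime x n \<Longrightarrow> x \<noteq> 0 \<and> x \<noteq> n"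
      using False by (metis coprime_0_left_iff coprime_self nat_dvd_1_iff_1)
    then show ?thesis by (auto simp: Zunits_iff in_totatives_iff)
  qed
  then have "Zunits n = totatives n" by blast
  then show ?thesis by (simp add: totient_def)
qed

lemma prime_dvd_prod_primes_iff:
  fixes P :: "nat set"
  assumes "finite P" "\<forall>q\<in>P. prime q" "prime p"
  shows "p dvd \<Prod>P \<longleftrightarrow> p \<in> P"
proof -
  have "p dvd \<Prod>P \<longleftrightarrow> (\<exists>q\<in>P. p dvd q)"
    using prime_dvd_prod_iff[OF assms(1,3), of id] by simp
  also have "\<dots> \<longleftrightarrow> p \<in> P"
    using assms(2,3) by (metis dvd_refl primes_dvd_imp_eq)
  finally show ?thesis .
qed

lemma coprimeI_prime_nat:
  fixes u n :: nat
  assumes "\<And>p. prime p \<Longrightarrow> p dvd n \<Longrightarrow> \<not> p dvd u"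
  shows "coprime u n"
proof (rule coprimeI)
  fix c assume c: "c dvd u" "c dvd n"
  show "is_unit c"
  proof (rule ccontr)
    assume "\<not> is_unit c"
    then obtain p where "prime p" "p dvd c" using prime_factor_nat by auto
    with c assms show False by (meson dvd_trans)
  qed
qed

text \<open>The lift is a + m t, with t the product of the primes of n not dividing a.\<close>
lemma coprime_lift:
  fixes m n a :: nat
  assumes "m dvd n" "n > 0" "coprime a m"
  shows "\<exists>u. coprime u n \<and> [u = a] (mod m)"
proof -
  define P where "P = {p \<in> prime_factors n. \<not> p dvd a}"
  define u where "u = a + m * \<Prod>P"
  have P_dvd: "p dvd \<Prod>P \<longleftrightarrow> p \<in> P" if "prime p" for p
    by (rule prime_dvd_prod_primes_iff[OF _ _ that]) (auto simp: P_def)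
  have "\<not> p dvd u" if p: "prime p" "p dvd n" for p
  proof (cases "p dvd a")
    case True
    then have "\<not> p dvd m"
      using assms(3) p(1) by (meson coprime_common_divisor not_prime_unit)
    moreover have "\<not> p dvd \<Prod>P" using True P_dvd[OF p(1)] by (simp add: P_def)
    ultimately have "\<not> p dvd m * \<Prod>P" using p(1) prime_dvd_mult_iff by blast
    with True show ?thesis by (simp add: u_def dvd_add_right_iff)
  next
    case False
    then have "p dvd \<Prod>P" using P_dvd[OF p(1)] p assms(2) by (simp add: P_def in_prime_factors_iff)
    with False show ?thesis by (simp add: u_def dvd_add_left_iff)
  qed
  then have "coprime u n" by (rule coprimeI_prime_nat)
  moreover have "[u = a] (mod m)" by (simp add: u_def cong_def)
  ultimately show ?thesis by blast
qed

lemma mod_in_Zunits: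
  fixes m n x :: nat
  assumes "m dvd n" "m > 0" "x \<in> Zunits n"
  shows "x mod m \<in> Zunits m"
proof -
  obtain k where "n = m * k" using assms(1) by blast
  with assms(3) have "coprime x m" by (simp add: Zunits_iff)
  with assms(2) show ?thesis by (simp add: Zunits_iff)
qed

lemma card_unit_fiber_le:
  fixes m n a b :: nat
  assumes "m dvd n" "n > 0" "a \<in> Zunits m" "b \<in> Zunits m"
  shows "card {u \<in> Zunits n. u mod m = a} \<le> card {u \<in> Zunits n. u mod m = b}"
proof -
  from assms(3,4) have a: "a < m" "coprime a m" and b: "b < m" "coprime b m"
    by (auto simp: Zunits_iff)
  obtain a' where a': "[a * a' = 1] (mod m)"
    using cong_solve_coprime_nat[OF a(2)] by auto
  have "coprime a' m"
    using cong_imp_coprime[OF cong_sym[OF a']] by simp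
  with b(2) have "coprime (b * a') m" by simp
  then obtain w where w: "coprime w n" "[w = b * a'] (mod m)"
    using coprime_lift[OF assms(1,2)] by blast
  define f where "f u = w * u mod n" for u
  show ?thesis
  proof (rule card_inj_on_le)
    show "inj_on f {u \<in> Zunits n. u mod m = a}"
    proof (rule inj_onI)
      fix u v
      assume "u \<in> {u \<in> Zunits n. u mod m = a}" "v \<in> {u \<in> Zunits n. u mod m = a}" "f u = f v"
      then have "u < n" "v < n" "[w * u = w * v] (mod n)"
        by (auto simp: Zunits_iff f_def cong_def)
      then show "u = v"
        using cong_mult_lcancel_nat[OF w(1)] cong_less_modulus_unique_nat by blast
    qed
    show "f ` {u \<in> Zunits n. u mod m = a} \<subseteq> {u \<in> Zunits n. u mod m = b}"
    proof (rule image_subsetI)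
      fix u assume "u \<in> {u \<in> Zunits n. u mod m = a}"
      then have u: "u \<in> Zunits n" "u mod m = a" by simp_all
      have "[w * u = b * a' * a] (mod m)"
        using cong_mult[OF w(2), of u a] u(2) a(1) by (simp add: cong_def)
      also have "b * a' * a = b * (a * a')" by simp
      also have "[\<dots> = b * 1] (mod m)" using cong_scalar_left[OF a'] .
      finally have "[w * u = b] (mod m)" by simp
      then have "f u mod m = b"
        using assms(1) b(1) by (simp add: f_def cong_def mod_mod_cancel)
      moreover have "f u \<in> Zunits n"
        using u(1) w(1) assms(2) by (simp add: Zunits_iff f_def)
      ultimately show "f u \<in> {u \<in> Zunits n. u mod m = b}" by simp
    qed
  qed simp
qed

text \<open>All fibres over units have a common size K, whence totient n = totient m * K.\<close>
lemma card_units_mod_in: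
  fixes m n :: nat
  assumes "m dvd n" "n > 0" "A \<subseteq> Zunits m"
  shows "card {x \<in> Zunits n. x mod m \<in> A} * totient m = card A * totient n"
proof -
  have m: "m > 0" using assms(1,2) by (auto intro: Nat.gr0I)
  define K where "K = card {u \<in> Zunits n. u mod m = 1 mod m}"
  have one: "1 mod m \<in> Zunits m" using m by (simp add: Zunits_iff)
  have fibre: "card {u \<in> Zunits n. u mod m = a} = K" if "a \<in> Zunits m" for a
    using card_unit_fiber_le[OF assms(1,2) that one] card_unit_fiber_le[OF assms(1,2) one that]
    by (simp add: K_def)
  have count: "card {x \<in> Zunits n. x mod m \<in> B} = card B * K" if "B \<subseteq> Zunits m" for B
  proof -
    have "finite B" by (rule finite_subset[OF that]) simp
    have "{x \<in> Zunits n. x mod m \<in> B} = (\<Union>a\<in>B. {u \<in> Zunits n. u mod m = a})" by blast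
    also have "card \<dots> = (\<Sum>a\<in>B. card {u \<in> Zunits n. u mod m = a})"
      by (rule card_UN_disjoint[OF \<open>finite B\<close>]) auto
    also have "\<dots> = (\<Sum>a\<in>B. K)" using fibre that by (intro sum.cong) auto
    also have "\<dots> = card B * K" by simp
    finally show ?thesis .
  qed
  have "{x \<in> Zunits n. x mod m \<in> Zunits m} = Zunits n"
    using mod_in_Zunits[OF assms(1) m] by blast
  then have "totient n = totient m * K"
    using count[of "Zunits m"] card_Zunits assms(2) m by simp
  then show ?thesis using count[OF assms(3)] by simp
qed

lemma ex_bounded_solution_cong_scaled_iff:
  fixes d m x l y :: nat
  assumes "d > 0" "coprime x (d * m)"
  shows "(\<exists>b\<le>l. [x * b = d * y] (mod d * m)) \<longleftrightarrow> (\<exists>c\<le>l div d. [x * c = y] (mod m))"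
proof
  assume "\<exists>b\<le>l. [x * b = d * y] (mod d * m)"
  then obtain b where b: "b \<le> l" "[x * b = d * y] (mod d * m)" by blast
  have "d dvd x * b"
    using cong_dvd_iff[OF cong_dvd_modulus_nat[OF b(2), of d]] by simp
  moreover have "coprime x d" using assms(2) by simp
  ultimately obtain c where c: "b = d * c"
    by (metis coprime_commute coprime_dvd_mult_right_iff dvdE)
  have "[d * (x * c) = d * y] (mod d * m)" using b(2) by (simp add: c ac_simps)
  then have "[x * c = y] (mod m)" using assms(1) by (simp add: cong_def mod_mult_mult1)
  moreover have "c \<le> l div d" using b(1) assms(1) by (simp add: c less_eq_div_iff_mult_less_eq ac_simps)
  ultimately show "\<exists>c\<le>l div d. [x * c = y] (mod m)" by blast
next
  assume "\<exists>c\<le>l div d. [x * c = y] (mod m)"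
  then obtain c where c: "c \<le> l div d" "[x * c = y] (mod m)" by blast
  have "[d * (x * c) = d * y] (mod d * m)" using cong_cmult_leftI[OF c(2)] .
  then have "[x * (d * c) = d * y] (mod d * m)" by (simp add: ac_simps)
  moreover have "d * c \<le> l" using c(1) assms(1) by (simp add: less_eq_div_iff_mult_less_eq ac_simps)
  ultimately show "\<exists>b\<le>l. [x * b = d * y] (mod d * m)" by blast
qed

lemma cong_mult_lcancel_less_imp_eq:
  fixes k a b m :: nat
  assumes "coprime k m" "[k * a = k * b] (mod m)" "a < m" "b < m"
  shows "a = b"
  using assms cong_mult_lcancel_nat cong_less_modulus_unique_nat by blast

lemma ex_Zunits_cong_mult:
  fixes c y m :: nat
  assumes "coprime c m" "coprime y m" "m > 0"
  shows "\<exists>a\<in>Zunits m. [a * c = y] (mod m)"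
proof -
  obtain c' where c': "[c * c' = 1] (mod m)"
    using cong_solve_coprime_nat[OF assms(1)] by auto
  define a where "a = y * c' mod m"
  have "[a = y * c'] (mod m)" by (simp add: a_def cong_def)
  then have "[a * c = y * c' * c] (mod m)" by (rule cong_mult[OF _ cong_refl])
  also have "y * c' * c = y * (c * c')" by simp
  also have "[y * (c * c') = y * 1] (mod m)" using cong_scalar_left[OF c'] .
  finally have ac: "[a * c = y] (mod m)" by simp
  moreover have "a \<in> Zunits m"
    using cong_imp_coprime[OF cong_sym[OF ac] assms(2)] assms(3) by (simp add: a_def Zunits_iff)
  ultimately show ?thesis by blast
qed

text \<open>For a unit y, the relation [a * c = y] (mod m) is the graph of a bijection of the units,
  so its pairs with c \<le> L are counted equally well by a or by c.\<close>
lemma card_bounded_solutions: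
  fixes m y L :: nat
  assumes "coprime y m" "L < m"
  shows "card {a \<in> Zunits m. \<exists>c\<le>L. [a * c = y] (mod m)} = rel_totient m L"
proof -
  define P where "P = {(a, c). a \<in> Zunits m \<and> c \<in> Zunits m \<and> c \<le> L \<and> [a * c = y] (mod m)}"
  have unit_factors: "coprime a m \<and> coprime c m" if "[a * c = y] (mod m)" for a c
    using cong_imp_coprime[OF cong_sym[OF that] assms(1)] by simp
  have P_iff: "(a, c) \<in> P \<longleftrightarrow> a \<in> Zunits m \<and> c \<le> L \<and> [a * c = y] (mod m)" for a c
    using unit_factors assms(2) by (auto simp: P_def Zunits_iff)
  have same_cong: "[a * c = a' * c'] (mod m)" if "(a, c) \<in> P" "(a', c') \<in> P" for a c a' c'
    using that by (meson P_iff cong_sym cong_trans)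
  have "inj_on fst P"
  proof -
    have "c = c'" if "(a, c) \<in> P" "(a, c') \<in> P" for a c c'
      using that same_cong[OF that] assms(2)
      by (intro cong_mult_lcancel_less_imp_eq[of a m]) (auto simp: P_iff Zunits_iff)
    then show ?thesis unfolding inj_on_def by (metis prod.collapse)
  qed
  moreover have "inj_on snd P"
  proof -
    have "a = a'" if "(a, c) \<in> P" "(a', c) \<in> P" for a a' c
      using that same_cong[OF that] unit_factors
      by (intro cong_mult_lcancel_less_imp_eq[of c m]) (auto simp: P_iff Zunits_iff ac_simps)
    then show ?thesis unfolding inj_on_def by (metis prod.collapse)
  qed
  moreover have "fst ` P = {a \<in> Zunits m. \<exists>c\<le>L. [a * c = y] (mod m)}"
    using P_iff by (fastforce intro: rev_image_eqI[of "(a, c)" for a c])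
  moreover have "snd ` P = {c \<in> Zunits m. c \<le> L}"
  proof
    show "snd ` P \<subseteq> {c \<in> Zunits m. c \<le> L}" by (auto simp: P_def)
    show "{c \<in> Zunits m. c \<le> L} \<subseteq> snd ` P"
    proof clarify
      fix c assume c: "c \<in> Zunits m" "c \<le> L"
      then obtain a where "a \<in> Zunits m" "[a * c = y] (mod m)"
        using ex_Zunits_cong_mult[of c m y] assms by (auto simp: Zunits_iff)
      with c(2) show "c \<in> snd ` P" using P_iff by (metis snd_conv image_eqI)
    qed
  qed
  ultimately show ?thesis
    unfolding rel_totient_def by (metis bij_betw_imageI bij_betw_same_card)
qed

lemma bounded_solutions_eq_reduced:
  fixes n d m l y y' :: nat
  assumes "d > 0" "n = d * m" "y = d * y'"
  shows "{x \<in> Zunits n. \<exists>b\<le>l. [x * b = y] (mod n)}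
    = {x \<in> Zunits n. x mod m \<in> {a \<in> Zunits m. \<exists>c\<le>l div d. [a * c = y'] (mod m)}}"
proof -
  have "(\<exists>b\<le>l. [x * b = y] (mod n)) \<longleftrightarrow> x mod m \<in> {a \<in> Zunits m. \<exists>c\<le>l div d. [a * c = y'] (mod m)}"
    if x: "x \<in> Zunits n" for x
  proof -
    have cx: "coprime x (d * m)" and "m > 0"
      using x assms(2) by (cases "m = 0"; simp add: Zunits_iff)+
    have "(\<exists>b\<le>l. [x * b = y] (mod n)) \<longleftrightarrow> (\<exists>c\<le>l div d. [x * c = y'] (mod m))"
      unfolding assms(2,3) by (rule ex_bounded_solution_cong_scaled_iff[OF assms(1) cx])
    also have "\<dots> \<longleftrightarrow> x mod m \<in> {a \<in> Zunits m. \<exists>c\<le>l div d. [a * c = y'] (mod m)}"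
      using mod_in_Zunits[of m n x] x assms \<open>m > 0\<close> by (simp add: cong_def mod_mult_left_eq)
    finally show ?thesis .
  qed
  then show ?thesis by auto
qed

theorem mainTheorem2:
  fixes n l d y :: nat
  assumes "l < n" and "d dvd n" and "y \<in> Zmd n d"
  shows "real (card {x \<in> Zunits n. \<exists>b::nat. b \<le> l \<and> [x * b = y] (mod n)})
         = real (rel_totient (n div d) (l div d)) / real (totient (n div d)) * real (totient n)"
proof -
  define m where "m = n div d"
  define y' where "y' = y div d"
  define L where "L = l div d"
  have n: "n > 0" using assms(1) by simp
  have y: "gcd y n = d" using assms(3) by (simp add: Zmd_def)
  have "coprime (y div gcd y n) (n div gcd y n)"
    using n by (intro div_gcd_coprime) simp
  then have "coprime y' m" by (simp only: y y'_def m_def)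
  have d: "d > 0" using y n by (metis gcd_eq_0_iff neq0_conv)
  have nm: "n = d * m" using assms(2) by (simp add: m_def)
  have y': "y = d * y'" using y by (metis y'_def gcd_dvd1 dvd_mult_div_cancel)
  have "L < m" using assms(1) d by (simp add: L_def nm less_mult_imp_div_less ac_simps)
  have "card {x \<in> Zunits n. x mod m \<in> {a \<in> Zunits m. \<exists>c\<le>L. [a * c = y'] (mod m)}} * totient m
      = card {a \<in> Zunits m. \<exists>c\<le>L. [a * c = y'] (mod m)} * totient n"
    using nm n by (intro card_units_mod_in) auto
  also have "card {a \<in> Zunits m. \<exists>c\<le>L. [a * c = y'] (mod m)} = rel_totient m L"
    by (rule card_bounded_solutions) fact+
  finally have "card {x \<in> Zunits n. \<exists>b\<le>l. [x * b = y] (mod n)} * totient m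
      = rel_totient m L * totient n"
    by (simp only: bounded_solutions_eq_reduced[OF d nm y'] L_def)
  moreover have "totient m > 0" using n nm by simp
  ultimately show ?thesis
    unfolding m_def[symmetric] L_def[symmetric] by (simp add: field_simps flip: of_nat_mult)
qed

end
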